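(* Let $(\psi_1;\phi_1,\phi_2)\in\mathbb{R}^3$ be coordinates on the coroot space of the semisimple Lie algebra $\mathrm{A}_1\oplus\mathrm{A}_2$ (basis of fundamental coroots), and consider the open dual fundamental Weyl chamber $$W=\{\psi_1>0,\ 2\phi_1-\phi_2>0,\ -\phi_1+2\phi_2>0\}.$$ Consider the hyperplane arrangement $\mathrm{I}(\mathrm{A}_1\oplus\mathrm{A}_2,(\mathbf{1},\mathbf{3})\oplus(\mathbf{2},\mathbf{3}))$ inside $W$, i.e. the arrangement of the hyperplanes $\{\phi:\ \varpi\cdot\phi=0\}$ for $\varpi$ ranging over the weights of $(\mathbf{1},\mathbf{3})\oplus(\mathbf{2},\mathbf{3})$. Then this arrangement has exactly eight chambers (connected components of the complement of the hyperplanes in $W$). With respect to the ordered list of linear forms $$\big(-\phi_1+\phi_2,\ -\psi_1-\phi_1+\phi_2,\ -\psi_1+\phi_1,\ \psi_1-\phi_2,\ \psi_1-\phi_1+\phi_2\big)$$ (these are the forms $\varpi\cdot\phi$ for the weights $(0;-1,1)$, $(-1;-1,1)$, $(-1;1,0)$, $(1;0,-1)$, $(1;-1,1)$), the eight chambers have the following sign vectors and explicit descriptions: - $1$: $(+,-,-,+,+)$, $0<\phi_2-\phi_1<\phi_1<\phi_2<\psi_1$; - $2$: $(+,-,-,-,+)$, $0<\phi_2-\phi_1<\phi_1<\psi_1<\phi_2$; - $3$: $(+,-,+,-,+)$, $0<\phi_2-\phi_1<\psi_1<\phi_1<\phi_2$; - $4$: $(+,+,+,-,+)$, $0<\psi_1<\phi_2-\phi_1<\phi_1<\phi_2$;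 - $1'$: $(-,-,-,+,+)$, $0<\phi_1-\phi_2<\phi_2<\phi_1<\psi_1$; - $2'$: $(-,-,+,+,+)$, $0<\phi_1-\phi_2<\phi_2<\psi_1<\phi_1$; - $3'$: $(-,-,+,-,+)$, $0<\phi_1-\phi_2<\psi_1<\phi_2<\phi_1$; - $4'$: $(-,-,+,-,-)$, $0<\psi_1<\phi_1-\phi_2<\phi_2<\phi_1$. The adjacency graph of the chambers (two chambers adjacent when they share a codimension-one wall) is the hexagon $1-2-3-3'-2'-1'-1$ together with the two extra edges $3-4$ and $3'-4'$.
   Context: Weights are written $(a;b,c)$ where $(a)$ is a weight of $\mathrm{A}_1$ and $(b,c)$ a weight of $\mathrm{A}_2$, both in the basis of fundamental weights; the pairing of a weight $\varpi=(a;b,c)$ with $\phi=(\psi_1;\phi_1,\phi_2)$ is $\varpi\cdot\phi=a\psi_1+b\phi_1+c\phi_2$. The weights of the fundamental $\mathbf{2}$ of $\mathrm{A}_1$ are $1,-1$; those of the fundamental $\mathbf{3}$ of $\mathrm{A}_2$ are $(1,0),(-1,1),(0,-1)$. Hence the weights of $(\mathbf{1},\mathbf{3})$ are $(0;1,0),(0;-1,1),(0;0,-1)$ and those of the bifundamental $(\mathbf{2},\mathbf{3})$ are $(\pm1;1,0),(\pm1;-1,1),(\pm1;0,-1)$. *)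

theory Defs
  imports "HOL-Analysis.Analysis"
begin

text \<open>Points of the coroot space are triples (psi1, phi1, phi2); weights are triples (a, b, c).\<close>

definition wpair :: "real \<times> real \<times> real \<Rightarrow> real \<times> real \<times> real \<Rightarrow> real" where
  "wpair w p = (case w of (a, b, c) \<Rightarrow> case p of (x, y, z) \<Rightarrow> a * x + b * y + c * z)"

definition Weyl :: "(real \<times> real \<times> real) set" where
  "Weyl = {(x, y, z). x > 0 \<and> 2 * y - z > 0 \<and> - y + 2 * z > 0}"

definition weights13_23 :: "(real \<times> real \<times> real) set" where
  "weights13_23 = {(0, 1, 0), (0, -1, 1), (0, 0, -1),
                   (1, 1, 0), (1, -1, 1), (1, 0, -1),
                   (-1, 1, 0), (-1, -1, 1), (-1, 0, -1)}"

definition arr_complement :: "(real \<times> real \<times> real) set" where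
  "arr_complement = Weyl - (\<Union>w\<in>weights13_23. {p. wpair w p = 0})"

definition chambers :: "(real \<times> real \<times> real) set set" where
  "chambers = components arr_complement"

text \<open>Two distinct chambers are adjacent if they share a codimension-one wall
  (inside the Weyl chamber): the intersection of their closures within W has affine dimension 2.\<close>
definition chamber_adjacent :: "(real \<times> real \<times> real) set \<Rightarrow> (real \<times> real \<times> real) set \<Rightarrow> bool" where
  "chamber_adjacent K L \<longleftrightarrow> K \<noteq> L \<and> aff_dim (closure K \<inter> closure L \<inter> Weyl) = 2"

definition sign_weights :: "(real \<times> real \<times> real) list" where
  "sign_weights = [(0, -1, 1), (-1, -1, 1), (-1, 1, 0), (1, 0, -1), (1, -1, 1)]"

definition sign_vector :: "real \<times> real \<times> real \<Rightarrow> real list" where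
  "sign_vector p = map (\<lambda>w. sgn (wpair w p)) sign_weights"

definition ch1 :: "(real \<times> real \<times> real) set" where
  "ch1 = {(s, x, y). 0 < y - x \<and> y - x < x \<and> x < y \<and> y < s}"
definition ch2 :: "(real \<times> real \<times> real) set" where
  "ch2 = {(s, x, y). 0 < y - x \<and> y - x < x \<and> x < s \<and> s < y}"
definition ch3 :: "(real \<times> real \<times> real) set" where
  "ch3 = {(s, x, y). 0 < y - x \<and> y - x < s \<and> s < x \<and> x < y}"
definition ch4 :: "(real \<times> real \<times> real) set" where
  "ch4 = {(s, x, y). 0 < s \<and> s < y - x \<and> y - x < x \<and> x < y}"
definition ch1' :: "(real \<times> real \<times> real) set" where
  "ch1' = {(s, x, y). 0 < x - y \<and> x - y < y \<and> y < x \<and> x < s}"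
definition ch2' :: "(real \<times> real \<times> real) set" where
  "ch2' = {(s, x, y). 0 < x - y \<and> x - y < y \<and> y < s \<and> s < x}"
definition ch3' :: "(real \<times> real \<times> real) set" where
  "ch3' = {(s, x, y). 0 < x - y \<and> x - y < s \<and> s < y \<and> y < x}"
definition ch4' :: "(real \<times> real \<times> real) set" where
  "ch4' = {(s, x, y). 0 < s \<and> s < x - y \<and> x - y < y \<and> y < x}"

definition adjacency_edges :: "((real \<times> real \<times> real) set \<times> (real \<times> real \<times> real) set) set" where
  "adjacency_edges = {(ch1, ch2), (ch2, ch3), (ch3, ch3'), (ch3', ch2'), (ch2', ch1'), (ch1', ch1),
                      (ch3, ch4), (ch3', ch4')}"

end

(*
  Each of the eight sets is an open polyhedral cone, given by strict linear inequalities, so it is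
  open, convex and (by an explicit point) nonempty.  The five listed forms have constant and
  pairwise different signs on them, so they are pairwise disjoint, and sorting psi1 into the chain
  0 < |phi1 - phi2| < min phi1 phi2 < max phi1 phi2 shows that they cover the complement of the
  arrangement in W.  Hence they are its connected components.  The closure of such a cone is the
  closed cone given by the weak inequalities, which turns adjacency into linear algebra: adjacent
  chambers share a wall containing three non-collinear points of W, while the closures of any two
  other distinct chambers meet W only on the line psi1 = phi1 = phi2.
*)

theory Submission
  imports Defs
begin

definition dual_cone :: "'a::real_inner set \<Rightarrow> 'a set" where
  "dual_cone N = {p. \<forall>w\<in>N. 0 \<le> w \<bullet> p}"

definition strict_dual_cone :: "'a::real_inner set \<Rightarrow> 'a set" where
  "strict_dual_cone N = {p. \<forall>w\<in>N. 0 < w \<bullet> p}"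

lemma strict_dual_cone_eq_INT: "strict_dual_cone N = (\<Inter>w\<in>N. {p. w \<bullet> p > 0})"
  by (auto simp: strict_dual_cone_def)

lemma open_strict_dual_cone: "finite N \<Longrightarrow> open (strict_dual_cone N)"
  unfolding strict_dual_cone_eq_INT by (intro open_INT ballI open_halfspace_gt)

lemma convex_strict_dual_cone: "convex (strict_dual_cone N)"
  unfolding strict_dual_cone_eq_INT by (intro convex_INT convex_halfspace_gt)

lemma closure_strict_dual_cone:
  fixes N :: "'a::euclidean_space set"
  assumes a: "a \<in> strict_dual_cone N"
  shows "closure (strict_dual_cone N) = dual_cone N"
proof
  have "closed (dual_cone N)"
    unfolding dual_cone_def Collect_ball_eq by (intro closed_INT ballI closed_halfspace_ge)
  then show "closure (strict_dual_cone N) \<subseteq> dual_cone N"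
    by (intro closure_minimal) (auto simp: strict_dual_cone_def dual_cone_def less_imp_le)
  show "dual_cone N \<subseteq> closure (strict_dual_cone N)"
  proof
    fix p assume p: "p \<in> dual_cone N"
    show "p \<in> closure (strict_dual_cone N)"
    proof (cases "p = a")
      case True
      with a show ?thesis by (simp add: closure_subset [THEN subsetD])
    next
      case False
      have "open_segment a p \<subseteq> strict_dual_cone N"
      proof
        fix x assume "x \<in> open_segment a p"
        then obtain u where u: "0 < u" "u < 1" and x: "x = (1 - u) *\<^sub>R a + u *\<^sub>R p"
          by (auto simp: in_segment)
        have "0 < w \<bullet> x" if "w \<in> N" for w
        proof -
          have "0 < (1 - u) * (w \<bullet> a)" "0 \<le> u * (w \<bullet> p)"
            using that a p u by (simp_all add: strict_dual_cone_def dual_cone_def)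
          then show ?thesis by (simp add: x inner_add_right)
        qed
        then show "x \<in> strict_dual_cone N" by (simp add: strict_dual_cone_def)
      qed
      then have "closure (open_segment a p) \<subseteq> closure (strict_dual_cone N)"
        by (rule closure_mono)
      moreover have "p \<in> closure (open_segment a p)"
        using False by simp
      ultimately show ?thesis by blast
    qed
  qed
qed

lemma aff_dim_eq_2_if_in_hyperplane:
  fixes S :: "'a::euclidean_space set"
  assumes "DIM('a) = 3" "w \<noteq> 0" "S \<subseteq> {p. w \<bullet> p = 0}"
    and "{a, b, c} \<subseteq> S" "\<not> collinear {a, b, c}"
  shows "aff_dim S = 2"
proof -
  have "aff_dim S \<le> aff_dim {p. w \<bullet> p = 0}"
    using assms(3) by (rule aff_dim_subset)
  also have "\<dots> = 2"
    using assms(1,2) by simp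
  finally have "aff_dim S \<le> 2" .
  moreover have "\<not> collinear S"
    using assms(4,5) collinear_subset by blast
  ultimately show ?thesis
    by (simp add: collinear_aff_dim)
qed

lemma distinct_disjoint_if_distinct_constant_values:
  assumes "list_all2 (\<lambda>K v. K \<noteq> {} \<and> (\<forall>p\<in>K. f p = v)) Ks vs"
    and "distinct vs"
  shows "distinct Ks" and "pairwise disjnt (set Ks)"
proof -
  define g where "g K = f (SOME p. p \<in> K)" for K
  have g_eq: "g K = v" if "K \<noteq> {}" "\<forall>p\<in>K. f p = v" for K v
    using that unfolding g_def by (metis ex_in_conv someI_ex)
  have "map g Ks = vs"
    using assms(1) by (induction rule: list_all2_induct) (simp_all add: g_eq)
  with assms(2) have "distinct (map g Ks)" by simp
  then show "distinct Ks" by (simp add: distinct_map)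
  from \<open>distinct (map g Ks)\<close> have inj: "inj_on g (set Ks)" by (simp add: distinct_map)
  have const: "\<forall>p\<in>K. f p = g K" if "K \<in> set Ks" for K
    using assms(1) that g_eq by (induction rule: list_all2_induct) auto
  show "pairwise disjnt (set Ks)"
  proof (rule pairwiseI)
    fix K L assume "K \<in> set Ks" "L \<in> set Ks" "K \<noteq> L"
    with inj const show "disjnt K L"
      by (metis disjnt_iff inj_onD)
  qed
qed

lemmas chamber_defs = ch1_def ch2_def ch3_def ch4_def ch1'_def ch2'_def ch3'_def ch4'_def

lemma chambers_as_strict_dual_cones:
  "ch1 = strict_dual_cone {(0, -1, 1), (0, 2, -1), (1, 0, -1)}"
  "ch2 = strict_dual_cone {(0, -1, 1), (0, 2, -1), (1, -1, 0), (-1, 0, 1)}"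
  "ch3 = strict_dual_cone {(0, -1, 1), (1, 1, -1), (-1, 1, 0)}"
  "ch4 = strict_dual_cone {(1, 0, 0), (-1, -1, 1), (0, 2, -1), (0, -1, 1)}"
  "ch1' = strict_dual_cone {(0, 1, -1), (0, -1, 2), (1, -1, 0)}"
  "ch2' = strict_dual_cone {(0, 1, -1), (0, -1, 2), (1, 0, -1), (-1, 1, 0)}"
  "ch3' = strict_dual_cone {(0, 1, -1), (1, -1, 1), (-1, 0, 1)}"
  "ch4' = strict_dual_cone {(1, 0, 0), (-1, 1, -1), (0, -1, 2), (0, 1, -1)}"
  by (auto simp: chamber_defs strict_dual_cone_def)

lemma chamber_witnesses:
  "(4, 2, 3) \<in> ch1" "(5/2, 2, 3) \<in> ch2" "(3/2, 2, 3) \<in> ch3" "(1/2, 2, 3) \<in> ch4"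
  "(4, 3, 2) \<in> ch1'" "(5/2, 3, 2) \<in> ch2'" "(3/2, 3, 2) \<in> ch3'" "(1/2, 3, 2) \<in> ch4'"
  by (simp_all add: chamber_defs)

lemma closure_chambers:
  "closure ch1 = dual_cone {(0, -1, 1), (0, 2, -1), (1, 0, -1)}"
  "closure ch2 = dual_cone {(0, -1, 1), (0, 2, -1), (1, -1, 0), (-1, 0, 1)}"
  "closure ch3 = dual_cone {(0, -1, 1), (1, 1, -1), (-1, 1, 0)}"
  "closure ch4 = dual_cone {(1, 0, 0), (-1, -1, 1), (0, 2, -1), (0, -1, 1)}"
  "closure ch1' = dual_cone {(0, 1, -1), (0, -1, 2), (1, -1, 0)}"
  "closure ch2' = dual_cone {(0, 1, -1), (0, -1, 2), (1, 0, -1), (-1, 1, 0)}"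
  "closure ch3' = dual_cone {(0, 1, -1), (1, -1, 1), (-1, 0, 1)}"
  "closure ch4' = dual_cone {(1, 0, 0), (-1, 1, -1), (0, -1, 2), (0, 1, -1)}"
  using chamber_witnesses[unfolded chambers_as_strict_dual_cones]
  by (simp_all only: chambers_as_strict_dual_cones) (rule closure_strict_dual_cone, assumption)+

lemma sign_vector_chambers:
  "\<forall>p\<in>ch1. sign_vector p = [1, -1, -1, 1, 1]"
  "\<forall>p\<in>ch2. sign_vector p = [1, -1, -1, -1, 1]"
  "\<forall>p\<in>ch3. sign_vector p = [1, -1, 1, -1, 1]"
  "\<forall>p\<in>ch4. sign_vector p = [1, 1, 1, -1, 1]"
  "\<forall>p\<in>ch1'. sign_vector p = [-1, -1, -1, 1, 1]"
  "\<forall>p\<in>ch2'. sign_vector p = [-1, -1, 1, 1, 1]"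
  "\<forall>p\<in>ch3'. sign_vector p = [-1, -1, 1, -1, 1]"
  "\<forall>p\<in>ch4'. sign_vector p = [-1, -1, 1, -1, -1]"
  by (auto simp: sign_vector_def sign_weights_def wpair_def sgn_if chamber_defs)

definition chamber_list :: "(real \<times> real \<times> real) set list" where
  "chamber_list = [ch1, ch2, ch3, ch4, ch1', ch2', ch3', ch4']"

lemma chambers_distinct_disjoint:
  "distinct chamber_list" "pairwise disjnt (set chamber_list)"
proof -
  have "list_all2 (\<lambda>K v. K \<noteq> {} \<and> (\<forall>p\<in>K. sign_vector p = v)) chamber_list
    [[1, -1, -1, 1, 1], [1, -1, -1, -1, 1], [1, -1, 1, -1, 1], [1, 1, 1, -1, 1],
     [-1, -1, -1, 1, 1], [-1, -1, 1, 1, 1], [-1, -1, 1, -1, 1], [-1, -1, 1, -1, -1]]"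
    using chamber_witnesses sign_vector_chambers unfolding chamber_list_def by auto
  from distinct_disjoint_if_distinct_constant_values[OF this]
  show "distinct chamber_list" "pairwise disjnt (set chamber_list)"
    by simp_all
qed

lemma chambers_cover_complement: "\<Union>(set chamber_list) = arr_complement"
proof
  show "\<Union>(set chamber_list) \<subseteq> arr_complement"
    by (auto simp: chamber_list_def chamber_defs arr_complement_def Weyl_def weights13_23_def
        wpair_def)
  show "arr_complement \<subseteq> \<Union>(set chamber_list)"
  proof
    fix p assume "p \<in> arr_complement"
    then obtain s x y where p: "p = (s, x, y)" and h: "s > 0" "2 * x - y > 0" "- x + 2 * y > 0"
      "x \<noteq> y" "s \<noteq> x" "s \<noteq> y" "s \<noteq> y - x" "s \<noteq> x - y"
      by (cases p) (auto simp: arr_complement_def Weyl_def weights13_23_def wpair_def)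
    consider "x < y" "s < y - x" | "x < y" "y - x < s" "s < x" | "x < y" "x < s" "s < y"
      | "x < y" "y < s" | "y < x" "s < x - y" | "y < x" "x - y < s" "s < y"
      | "y < x" "y < s" "s < x" | "y < x" "x < s"
      using h by argo
    then show "p \<in> \<Union>(set chamber_list)"
      using h unfolding p by cases (auto simp: chamber_list_def chamber_defs)
  qed
qed

lemma chambers_eq_chamber_list: "chambers = set chamber_list"
  unfolding chambers_def
proof (rule components_open_unique)
  show "pairwise disjnt (set chamber_list)" "\<Union>(set chamber_list) = arr_complement"
    by (fact chambers_distinct_disjoint chambers_cover_complement)+
  fix K assume "K \<in> set chamber_list"
  then show "open K \<and> connected K \<and> K \<noteq> {}"
    using chamber_witnesses unfolding chamber_list_def
    by (auto simp: chambers_as_strict_dual_cones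
        intro!: open_strict_dual_cone convex_connected convex_strict_dual_cone)
qed

lemma chamber_adjacent_sym: "chamber_adjacent K L \<Longrightarrow> chamber_adjacent L K"
  unfolding chamber_adjacent_def by (metis Int_commute)

lemma not_chamber_adjacent_self: "\<not> chamber_adjacent K K"
  by (simp add: chamber_adjacent_def)

lemma chamber_adjacent_if_common_wall:
  fixes K L :: "(real \<times> real \<times> real) set"
  assumes "K \<noteq> L" "w \<noteq> 0" "\<not> collinear {a, b, c}"
    and "{a, b, c} \<subseteq> closure K \<inter> closure L \<inter> Weyl"
    and "\<forall>p \<in> closure K \<inter> closure L \<inter> Weyl. w \<bullet> p = 0"
  shows "chamber_adjacent K L"
proof -
  have "aff_dim (closure K \<inter> closure L \<inter> Weyl) = 2"
    by (rule aff_dim_eq_2_if_in_hyperplane[OF _ assms(2) _ assms(4,3)]) (use assms(5) in auto)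
  with assms(1) show ?thesis
    by (simp add: chamber_adjacent_def)
qed

definition diagonal :: "(real \<times> real \<times> real) set" where
  "diagonal = {(s, x, y). s = x \<and> x = y}"

lemma collinear_diagonal: "collinear diagonal"
proof -
  have "p = 0 + fst p *\<^sub>R (1, 1, 1)" if "p \<in> diagonal" for p
    using that by (auto simp: diagonal_def)
  then show ?thesis
    unfolding collinear_alt by blast
qed

lemma not_chamber_adjacent_if_meet_on_diagonal:
  assumes "closure K \<inter> closure L \<inter> Weyl \<subseteq> diagonal"
  shows "\<not> chamber_adjacent K L \<and> \<not> chamber_adjacent L K"
proof -
  have "collinear (closure K \<inter> closure L \<inter> Weyl)"
    using collinear_diagonal assms by (rule collinear_subset)
  moreover have "closure L \<inter> closure K \<inter> Weyl = closure K \<inter> closure L \<inter> Weyl"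
    by blast
  ultimately show ?thesis
    by (simp add: chamber_adjacent_def collinear_aff_dim)
qed

lemma adjacent_chambers:
  "chamber_adjacent ch1 ch2"
  "chamber_adjacent ch2 ch3"
  "chamber_adjacent ch3 ch3'"
  "chamber_adjacent ch2' ch3'"
  "chamber_adjacent ch1' ch2'"
  "chamber_adjacent ch1 ch1'"
  "chamber_adjacent ch3 ch4"
  "chamber_adjacent ch3' ch4'"
proof -
  note neq = chambers_distinct_disjoint(1)[unfolded chamber_list_def, simplified]
  show "chamber_adjacent ch1 ch2"
    by (rule chamber_adjacent_if_common_wall
        [where w = "(1, 0, -1)" and a = "(3, 2, 3)" and b = "(7/2, 2, 7/2)" and c = "(5, 3, 5)"])
      (simp_all add: neq prod_eq_iff collinear_3 collinear_lemma,
        auto simp: closure_chambers dual_cone_def Weyl_def)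
  show "chamber_adjacent ch2 ch3"
    by (rule chamber_adjacent_if_common_wall
        [where w = "(1, -1, 0)" and a = "(2, 2, 3)" and b = "(3, 3, 5)" and c = "(3, 3, 4)"])
      (simp_all add: neq prod_eq_iff collinear_3 collinear_lemma,
        auto simp: closure_chambers dual_cone_def Weyl_def)
  show "chamber_adjacent ch3 ch3'"
    by (rule chamber_adjacent_if_common_wall
        [where w = "(0, -1, 1)" and a = "(1, 2, 2)" and b = "(1, 3, 3)" and c = "(2, 3, 3)"])
      (simp_all add: neq prod_eq_iff collinear_3 collinear_lemma,
        auto simp: closure_chambers dual_cone_def Weyl_def)
  show "chamber_adjacent ch2' ch3'"
    by (rule chamber_adjacent_if_common_wall
        [where w = "(1, 0, -1)" and a = "(2, 3, 2)" and b = "(3, 5, 3)" and c = "(3, 4, 3)"])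
      (simp_all add: neq prod_eq_iff collinear_3 collinear_lemma,
        auto simp: closure_chambers dual_cone_def Weyl_def)
  show "chamber_adjacent ch1' ch2'"
    by (rule chamber_adjacent_if_common_wall
        [where w = "(1, -1, 0)" and a = "(3, 3, 2)" and b = "(7/2, 7/2, 2)" and c = "(5, 5, 3)"])
      (simp_all add: neq prod_eq_iff collinear_3 collinear_lemma,
        auto simp: closure_chambers dual_cone_def Weyl_def)
  show "chamber_adjacent ch1 ch1'"
    by (rule chamber_adjacent_if_common_wall
        [where w = "(0, -1, 1)" and a = "(3, 2, 2)" and b = "(4, 2, 2)" and c = "(4, 3, 3)"])
      (simp_all add: neq prod_eq_iff collinear_3 collinear_lemma,
        auto simp: closure_chambers dual_cone_def Weyl_def)
  show "chamber_adjacent ch3 ch4"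
    by (rule chamber_adjacent_if_common_wall
        [where w = "(1, 1, -1)" and a = "(1, 2, 3)" and b = "(2, 3, 5)" and c = "(1, 3, 4)"])
      (simp_all add: neq prod_eq_iff collinear_3 collinear_lemma,
        auto simp: closure_chambers dual_cone_def Weyl_def)
  show "chamber_adjacent ch3' ch4'"
    by (rule chamber_adjacent_if_common_wall
        [where w = "(1, -1, 1)" and a = "(1, 3, 2)" and b = "(2, 5, 3)" and c = "(1, 4, 3)"])
      (simp_all add: neq prod_eq_iff collinear_3 collinear_lemma,
        auto simp: closure_chambers dual_cone_def Weyl_def)
qed

lemma closures_meet_on_diagonal:
  "closure ch1 \<inter> closure ch3 \<inter> Weyl \<subseteq> diagonal"
  "closure ch1 \<inter> closure ch4 \<inter> Weyl \<subseteq> diagonal"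
  "closure ch1 \<inter> closure ch2' \<inter> Weyl \<subseteq> diagonal"
  "closure ch1 \<inter> closure ch3' \<inter> Weyl \<subseteq> diagonal"
  "closure ch1 \<inter> closure ch4' \<inter> Weyl \<subseteq> diagonal"
  "closure ch2 \<inter> closure ch4 \<inter> Weyl \<subseteq> diagonal"
  "closure ch2 \<inter> closure ch1' \<inter> Weyl \<subseteq> diagonal"
  "closure ch2 \<inter> closure ch2' \<inter> Weyl \<subseteq> diagonal"
  "closure ch2 \<inter> closure ch3' \<inter> Weyl \<subseteq> diagonal"
  "closure ch2 \<inter> closure ch4' \<inter> Weyl \<subseteq> diagonal"
  "closure ch3 \<inter> closure ch1' \<inter> Weyl \<subseteq> diagonal"
  "closure ch3 \<inter> closure ch2' \<inter> Weyl \<subseteq> diagonal"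
  "closure ch3 \<inter> closure ch4' \<inter> Weyl \<subseteq> diagonal"
  "closure ch4 \<inter> closure ch1' \<inter> Weyl \<subseteq> diagonal"
  "closure ch4 \<inter> closure ch2' \<inter> Weyl \<subseteq> diagonal"
  "closure ch4 \<inter> closure ch3' \<inter> Weyl \<subseteq> diagonal"
  "closure ch4 \<inter> closure ch4' \<inter> Weyl \<subseteq> diagonal"
  "closure ch1' \<inter> closure ch3' \<inter> Weyl \<subseteq> diagonal"
  "closure ch1' \<inter> closure ch4' \<inter> Weyl \<subseteq> diagonal"
  "closure ch2' \<inter> closure ch4' \<inter> Weyl \<subseteq> diagonal"
  by (auto simp: closure_chambers dual_cone_def Weyl_def diagonal_def)

lemma chamber_adjacent_iff_edge:
  assumes "K \<in> set chamber_list" "L \<in> set chamber_list"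
  shows "chamber_adjacent K L \<longleftrightarrow>
    (K, L) \<in> adjacency_edges \<or> (L, K) \<in> adjacency_edges"
proof -
  have "\<forall>K\<in>set chamber_list. \<forall>L\<in>set chamber_list. chamber_adjacent K L \<longrightarrow>
      (K, L) \<in> adjacency_edges \<or> (L, K) \<in> adjacency_edges"
    using closures_meet_on_diagonal[THEN not_chamber_adjacent_if_meet_on_diagonal]
    by (simp add: chamber_list_def adjacency_edges_def not_chamber_adjacent_self)
  moreover have "chamber_adjacent K L" if "(K, L) \<in> adjacency_edges \<or> (L, K) \<in> adjacency_edges"
    using that unfolding adjacency_edges_def
    by (auto simp: adjacent_chambers adjacent_chambers[THEN chamber_adjacent_sym])
  ultimately show ?thesis
    using assms by blast
qed

theorem theorem4p1:
  shows "chambers = {ch1, ch2, ch3, ch4, ch1', ch2', ch3', ch4'}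
    \<and> card chambers = 8
    \<and> (\<forall>p\<in>ch1. sign_vector p = [1, -1, -1, 1, 1])
    \<and> (\<forall>p\<in>ch2. sign_vector p = [1, -1, -1, -1, 1])
    \<and> (\<forall>p\<in>ch3. sign_vector p = [1, -1, 1, -1, 1])
    \<and> (\<forall>p\<in>ch4. sign_vector p = [1, 1, 1, -1, 1])
    \<and> (\<forall>p\<in>ch1'. sign_vector p = [-1, -1, -1, 1, 1])
    \<and> (\<forall>p\<in>ch2'. sign_vector p = [-1, -1, 1, 1, 1])
    \<and> (\<forall>p\<in>ch3'. sign_vector p = [-1, -1, 1, -1, 1])
    \<and> (\<forall>p\<in>ch4'. sign_vector p = [-1, -1, 1, -1, -1])
    \<and> (\<forall>K\<in>chambers. \<forall>L\<in>chambers.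
         chamber_adjacent K L \<longleftrightarrow> (K, L) \<in> adjacency_edges \<or> (L, K) \<in> adjacency_edges)"
proof -
  have "card chambers = 8"
    using chambers_eq_chamber_list distinct_card[OF chambers_distinct_disjoint(1)]
    by (simp add: chamber_list_def)
  with chambers_eq_chamber_list chamber_adjacent_iff_edge sign_vector_chambers
  show ?thesis
    by (simp add: chamber_list_def)
qed

end
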